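(* Let $a\in\mathbb{Z}$, $b\in\mathbb{Z}_{>0}$, $x(1)\in\mathbb{R}$, and $p(1)=a/b$. Define $(p(i),x(i))_{i\ge1}$ by $$p(i+1)=p(i)-\operatorname{sgn}x(i),\qquad x(i+1)=x(i)+p(i)-\operatorname{sgn}x(i).$$ Then the sequence $(x(i))_{i\ge 1}$ is bounded if and only if there exists $k\ge 1$ with $(p(k+1),x(k+1))=(p(1),x(1))$ (in which case the whole sequence $(p(i),x(i))$ is periodic with period $k$).
   Context: Here $\operatorname{sgn}(x)=x/|x|$ for $x\neq 0$ and $\operatorname{sgn}(0)=0$. *)

theory Defs
  imports Complex_Main
begin

text \<open>orbit a b x1 n = (p(n+1), x(n+1)), i.e. index shifted by one.
  p(1) = a/b, x(1) = x1,
  p(i+1) = p(i) - sgn x(i),  x(i+1) = x(i) + p(i) - sgn x(i).\<close>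
primrec orbit :: "int \<Rightarrow> int \<Rightarrow> real \<Rightarrow> nat \<Rightarrow> real \<times> real" where
  "orbit a b x1 0 = (real_of_int a / real_of_int b, x1)"
| "orbit a b x1 (Suc n) =
     (let (p, x) = orbit a b x1 n in (p - sgn x, x + p - sgn x))"

end

theory Submission
  imports Defs
begin

text \<open>The step map \<open>(p, x) \<mapsto> (p - sgn x, x + p - sgn x)\<close> is injective, since \<open>x\<close> is
  recovered as the difference of the two new coordinates. Every point of the orbit lies in
  the lattice \<open>(a/b + \<int>) \<times> (x(1) + \<int>/b)\<close>. If \<open>x\<close> stays bounded then so does
  \<open>p(i+1) = x(i+1) - x(i)\<close>, so the orbit visits only finitely many lattice points and some point
  repeats; by injectivity the orbit of an injective map can only repeat by returning to its
  start.\<close>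

definition step :: "real \<times> real \<Rightarrow> real \<times> real" where
  "step s = (fst s - sgn (snd s), snd s + fst s - sgn (snd s))"

lemma inj_step: "inj step"
proof (rule injI)
  fix u v assume "step u = step v"
  then have "fst u - sgn (snd u) = fst v - sgn (snd v)"
    and "snd u + fst u - sgn (snd u) = snd v + fst v - sgn (snd v)"
    by (simp_all add: step_def)
  then have "snd u = snd v" by linarith
  then show "u = v" using \<open>fst u - sgn (snd u) = fst v - sgn (snd v)\<close> by (simp add: prod_eq_iff)
qed

lemma orbit_eq_funpow_step: "orbit a b x1 n = (step ^^ n) (orbit a b x1 0)"
  by (induction n) (simp_all add: step_def split: prod.splits)

lemma funpow_returns_if_repeats:
  assumes "inj f" and "(f ^^ (i + d)) s = (f ^^ i) s"
  shows "(f ^^ d) s = s"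
  using assms(2)
proof (induction i)
  case (Suc i)
  then show ?case using injD[OF \<open>inj f\<close>] by simp
qed simp

lemma finite_range_funpow_iff_periodic:
  assumes "inj f"
  shows "finite (range (\<lambda>n. (f ^^ n) s)) \<longleftrightarrow> (\<exists>k\<ge>1. (f ^^ k) s = s)"
proof
  assume "finite (range (\<lambda>n. (f ^^ n) s))"
  then have "\<not> inj (\<lambda>n. (f ^^ n) s)"
    using finite_imageD infinite_UNIV_nat by blast
  then obtain i j where "i < j" and "(f ^^ j) s = (f ^^ i) s"
    unfolding inj_def by (metis linorder_neq_iff)
  then have "(f ^^ (i + (j - i))) s = (f ^^ i) s" by simp
  then have "(f ^^ (j - i)) s = s" by (rule funpow_returns_if_repeats[OF assms])
  then show "\<exists>k\<ge>1. (f ^^ k) s = s" using \<open>i < j\<close> by (intro exI[of _ "j - i"]) simp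
next
  assume "\<exists>k\<ge>1. (f ^^ k) s = s"
  then obtain k where "k \<ge> 1" and "(f ^^ k) s = s" by blast
  then have "(f ^^ n) s \<in> (\<lambda>n. (f ^^ n) s) ` {..<k}" for n
    by (intro image_eqI[where x = "n mod k"]) (simp_all add: funpow_mod_eq)
  then have "range (\<lambda>n. (f ^^ n) s) \<subseteq> (\<lambda>n. (f ^^ n) s) ` {..<k}"
    by blast
  then show "finite (range (\<lambda>n. (f ^^ n) s))" by (rule finite_subset) simp
qed

lemma finite_bounded_shifted_lattice:
  fixes m c R :: real
  assumes "m \<noteq> 0"
  shows "finite {x. m * (x - c) \<in> \<int> \<and> \<bar>x\<bar> \<le> R}"
proof -
  define N where "N = \<lceil>\<bar>m\<bar> * (R + \<bar>c\<bar>)\<rceil>"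
  have "{x. m * (x - c) \<in> \<int> \<and> \<bar>x\<bar> \<le> R} \<subseteq> (\<lambda>j. c + of_int j / m) ` {-N..N}"
  proof
    fix x assume x: "x \<in> {x. m * (x - c) \<in> \<int> \<and> \<bar>x\<bar> \<le> R}"
    then obtain j where j: "m * (x - c) = of_int j" by (auto elim: Ints_cases)
    have "\<bar>of_int j\<bar> = \<bar>m\<bar> * \<bar>x - c\<bar>" by (simp add: j[symmetric] abs_mult)
    also have "\<dots> \<le> \<bar>m\<bar> * (R + \<bar>c\<bar>)"
      using x by (intro mult_left_mono) auto
    finally have "\<bar>j\<bar> \<le> N" unfolding N_def by linarith
    moreover have "x = c + of_int j / m" using j assms by (simp add: field_simps)
    ultimately show "x \<in> (\<lambda>j. c + of_int j / m) ` {-N..N}"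
      by (intro image_eqI[where x = j]) auto
  qed
  then show ?thesis by (rule finite_subset) simp
qed

lemma orbit_in_lattice:
  assumes "b \<noteq> 0"
  shows "fst (orbit a b x1 n) - a / b \<in> \<int> \<and> b * (snd (orbit a b x1 n) - x1) \<in> \<int>"
proof (induction n)
  case (Suc n)
  obtain p x where px: "orbit a b x1 n = (p, x)" by fastforce
  have sgn_int: "sgn x \<in> \<int>" by (simp add: sgn_real_def)
  have p_int: "p - a / b \<in> \<int>" and x_int: "b * (x - x1) \<in> \<int>" using Suc px by simp_all
  have "p - sgn x - a / b = (p - a / b) - sgn x" by simp
  then have "p - sgn x - a / b \<in> \<int>" using p_int sgn_int by (metis Ints_diff)
  moreover have "b * (x + p - sgn x - x1) = b * (x - x1) + b * (p - a / b) + a - b * sgn x"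
    using assms by (simp add: field_simps)
  then have "b * (x + p - sgn x - x1) \<in> \<int>"
    using p_int x_int sgn_int by (metis Ints_add Ints_diff Ints_mult Ints_of_int)
  ultimately show ?case by (simp add: px)
qed simp

lemma fst_orbit_Suc: "fst (orbit a b x1 (Suc n)) = snd (orbit a b x1 (Suc n)) - snd (orbit a b x1 n)"
  by (simp add: split_beta Let_def)

lemma Bseq_orbit_iff_finite_range:
  assumes "b \<noteq> 0"
  shows "Bseq (\<lambda>n. snd (orbit a b x1 n)) \<longleftrightarrow> finite (range (orbit a b x1))"
proof
  assume "Bseq (\<lambda>n. snd (orbit a b x1 n))"
  then obtain K where K: "\<And>n. \<bar>snd (orbit a b x1 n)\<bar> \<le> K" by (metis BseqE real_norm_def)
  define R where "R = 2 * K + \<bar>a / b\<bar>"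
  have R: "\<bar>fst (orbit a b x1 n)\<bar> \<le> R" for n
  proof (cases n)
    case (Suc m)
    have "\<bar>fst (orbit a b x1 (Suc m))\<bar> \<le> 2 * K"
      using K[of "Suc m"] K[of m] fst_orbit_Suc[of a b x1 m] by linarith
    then show ?thesis unfolding R_def Suc by linarith
  qed (use K[of 0] in \<open>simp add: R_def\<close>)
  have "range (orbit a b x1) \<subseteq>
      {p. 1 * (p - a / b) \<in> \<int> \<and> \<bar>p\<bar> \<le> R} \<times> {x. b * (x - x1) \<in> \<int> \<and> \<bar>x\<bar> \<le> K}"
  proof
    fix s assume "s \<in> range (orbit a b x1)"
    then obtain n where "s = orbit a b x1 n" by blast
    then show "s \<in> {p. 1 * (p - a / b) \<in> \<int> \<and> \<bar>p\<bar> \<le> R} \<times> {x. b * (x - x1) \<in> \<int> \<and> \<bar>x\<bar> \<le> K}"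
      using K[of n] R[of n] orbit_in_lattice[OF assms, of a x1 n] by (simp add: mem_Times_iff)
  qed
  moreover have "finite ({p. 1 * (p - a / b) \<in> \<int> \<and> \<bar>p\<bar> \<le> R} \<times> {x. b * (x - x1) \<in> \<int> \<and> \<bar>x\<bar> \<le> K})"
    using assms by (intro finite_cartesian_product finite_bounded_shifted_lattice) simp_all
  ultimately show "finite (range (orbit a b x1))" by (rule finite_subset)
next
  assume "finite (range (orbit a b x1))"
  then have "finite (abs ` snd ` range (orbit a b x1))" by simp
  then have "\<bar>snd (orbit a b x1 n)\<bar> \<le> Max (abs ` snd ` range (orbit a b x1))" for n
    by (rule Max_ge) simp
  then show "Bseq (\<lambda>n. snd (orbit a b x1 n))" by (intro BseqI') simp
qed

theorem mainTheorem4: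
  fixes a b :: int and x1 :: real
  assumes "b > 0"
  shows "Bseq (\<lambda>n. snd (orbit a b x1 n)) \<longleftrightarrow>
         (\<exists>k\<ge>1. orbit a b x1 k = orbit a b x1 0)"
proof -
  have "Bseq (\<lambda>n. snd (orbit a b x1 n)) \<longleftrightarrow> finite (range (orbit a b x1))"
    using assms by (intro Bseq_orbit_iff_finite_range) simp
  also have "range (orbit a b x1) = range (\<lambda>n. (step ^^ n) (orbit a b x1 0))"
    by (simp only: orbit_eq_funpow_step[symmetric])
  also have "finite \<dots> \<longleftrightarrow> (\<exists>k\<ge>1. (step ^^ k) (orbit a b x1 0) = orbit a b x1 0)"
    by (rule finite_range_funpow_iff_periodic[OF inj_step])
  finally show ?thesis by (simp only: orbit_eq_funpow_step[symmetric])
qed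

end
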